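(* Let $R$ be a commutative ring. A map $p\colon E\to B$ of DG $R$-modules satisfies the enriched right lifting property against every map $S^{n-1}_R\to D^n_R$, $n\in\mathbb{Z}$, if and only if $p$ is a degreewise $R$-split epimorphism that is a chain homotopy equivalence.
   Context: DG $R$-modules are $\mathbb{Z}$-graded chain complexes of $R$-modules. $S^{n-1}_R$ is $R$ concentrated in degree $n-1$; $D^n_R$ is $R$ in degrees $n$ and $n-1$ with identity differential; $S^{n-1}_R\to D^n_R$ is the inclusion in degree $n-1$. For DG $R$-modules $M,N$, $\mathcal{M}_R(M,N)$ is the $R$-module of chain maps. For $i\colon W\to X$ and $p\colon E\to B$, $\underline{\mathrm{Sq}}(i,p)$ is the pullback of $R$-modules of $p_*\colon \mathcal{M}_R(W,E)\to \mathcal{M}_R(W,B)$ and $i^*\colon \mathcal{M}_R(X,B)\to\mathcal{M}_R(W,B)$. The map $p$ has the enriched right lifting property against $i$ if the induced map $\mathcal{M}_R(X,E)\to\underline{\mathrm{Sq}}(i,p)$ is a split epimorphism of $R$-modules. *)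

theory Defs
  imports Main "HOL.Modules" "HOL-Library.Function_Algebras" "HOL-Library.Product_Plus"
begin

text \<open>The components live inside an
ambient R-module 'm (scalar multiplication sc): the component in degree n is the
submodule carr M n, and the differential in degree n is diff M n : M_n \<rightarrow> M_(n-1).\<close>

type_synonym 'm dg = "(int \<Rightarrow> 'm set) \<times> (int \<Rightarrow> 'm \<Rightarrow> 'm)"

definition carr :: "'m dg \<Rightarrow> int \<Rightarrow> 'm set" where "carr M = fst M"
definition diff :: "'m dg \<Rightarrow> int \<Rightarrow> 'm \<Rightarrow> 'm" where "diff M = snd M"

definition lin_on :: "('r \<Rightarrow> 'a \<Rightarrow> 'a) \<Rightarrow> ('r \<Rightarrow> 'b \<Rightarrow> 'b) \<Rightarrow> 'a set \<Rightarrow> ('a::plus \<Rightarrow> 'b::plus) \<Rightarrow> bool"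
  where "lin_on sa sb S f \<longleftrightarrow>
    (\<forall>x\<in>S. \<forall>y\<in>S. f (x + y) = f x + f y) \<and> (\<forall>r. \<forall>x\<in>S. f (sa r x) = sb r (f x))"

definition dg_module :: "('r::comm_ring_1 \<Rightarrow> 'm::ab_group_add \<Rightarrow> 'm) \<Rightarrow> 'm dg \<Rightarrow> bool" where
  "dg_module sc M \<longleftrightarrow> module sc \<and>
     (\<forall>n. module.subspace sc (carr M n)) \<and>
     (\<forall>n. \<forall>x\<in>carr M n. diff M n x \<in> carr M (n - 1)) \<and>
     (\<forall>n. lin_on sc sc (carr M n) (diff M n)) \<and>
     (\<forall>n. \<forall>x\<in>carr M n. diff M (n - 1) (diff M n x) = 0)"

text \<open>Chain maps (degree 0, R-linear, commuting with differentials). They are taken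
extensional (zero outside the carriers) so that the chain maps form an R-module
under pointwise operations.\<close>
definition chain_map :: "('r::comm_ring_1 \<Rightarrow> 'a::ab_group_add \<Rightarrow> 'a) \<Rightarrow> 'a dg \<Rightarrow>
    ('r \<Rightarrow> 'b::ab_group_add \<Rightarrow> 'b) \<Rightarrow> 'b dg \<Rightarrow> (int \<Rightarrow> 'a \<Rightarrow> 'b) \<Rightarrow> bool" where
  "chain_map sa A sb B f \<longleftrightarrow>
     (\<forall>n. \<forall>x\<in>carr A n. f n x \<in> carr B n) \<and>
     (\<forall>n. lin_on sa sb (carr A n) (f n)) \<and>
     (\<forall>n. \<forall>x\<in>carr A n. f (n - 1) (diff A n x) = diff B n (f n x)) \<and>
     (\<forall>n x. x \<notin> carr A n \<longrightarrow> f n x = 0)"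

definition hom_dg where
  "hom_dg sa A sb B = {f. chain_map sa A sb B f}"

definition hscale :: "('r \<Rightarrow> 'b \<Rightarrow> 'b) \<Rightarrow> 'r \<Rightarrow> (int \<Rightarrow> 'a \<Rightarrow> 'b) \<Rightarrow> (int \<Rightarrow> 'a \<Rightarrow> 'b)" where
  "hscale sb r f = (\<lambda>n x. sb r (f n x))"

definition pscale :: "('r \<Rightarrow> 'b \<Rightarrow> 'b) \<Rightarrow> ('r \<Rightarrow> 'd \<Rightarrow> 'd) \<Rightarrow> 'r \<Rightarrow>
    (int \<Rightarrow> 'a \<Rightarrow> 'b) \<times> (int \<Rightarrow> 'c \<Rightarrow> 'd) \<Rightarrow> (int \<Rightarrow> 'a \<Rightarrow> 'b) \<times> (int \<Rightarrow> 'c \<Rightarrow> 'd)" where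
  "pscale sb sd r z = (hscale sb r (fst z), hscale sd r (snd z))"

text \<open>The pullback \<open>Sq(i,p)\<close> of \<open>p_*: \<M>(W,E) \<rightarrow> \<M>(W,B)\<close> and \<open>i^*: \<M>(X,B) \<rightarrow> \<M>(W,B)\<close>,
as the submodule of pairs of \<M>(W,E) \<times> \<M>(X,B) (operations componentwise).\<close>
definition sq_dg where
  "sq_dg sW W sX X i sE E sB B p =
     {(a, b). a \<in> hom_dg sW W sE E \<and> b \<in> hom_dg sX X sB B \<and>
              (\<lambda>n x. p n (a n x)) = (\<lambda>n x. b n (i n x))}"

definition sq_induced where
  "sq_induced i p f = ((\<lambda>n x. f n (i n x)), (\<lambda>n x. p n (f n x)))"

text \<open>Enriched right lifting property of p against i: the induced map is a split
epimorphism of R-modules, i.e. it has an R-linear section.\<close>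
definition enriched_rlp where
  "enriched_rlp sW W sX X i sE E sB B p \<longleftrightarrow>
     (\<exists>s. (\<forall>z\<in>sq_dg sW W sX X i sE E sB B p. s z \<in> hom_dg sX X sE E) \<and>
          lin_on (pscale sE sB) (hscale sE) (sq_dg sW W sX X i sE E sB B p) s \<and>
          (\<forall>z\<in>sq_dg sW W sX X i sE E sB B p. sq_induced i p (s z) = z))"

definition sphere_dg :: "int \<Rightarrow> 'r::comm_ring_1 dg" where
  "sphere_dg n = ((\<lambda>k. if k = n - 1 then UNIV else {0}), (\<lambda>k x. 0))"

definition disk_dg :: "int \<Rightarrow> 'r::comm_ring_1 dg" where
  "disk_dg n = ((\<lambda>k. if k = n \<or> k = n - 1 then UNIV else {0}), (\<lambda>k x. if k = n then x else 0))"

definition sphere_incl :: "int \<Rightarrow> int \<Rightarrow> 'r::comm_ring_1 \<Rightarrow> 'r" where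
  "sphere_incl n = (\<lambda>k x. if k = n - 1 then x else 0)"

definition degreewise_split_epi where
  "degreewise_split_epi sE E sB B p \<longleftrightarrow>
     (\<forall>n. \<exists>s. (\<forall>y\<in>carr B n. s y \<in> carr E n) \<and> lin_on sB sE (carr B n) s \<and>
              (\<forall>y\<in>carr B n. p n (s y) = y))"

definition chain_homotopic where
  "chain_homotopic sa A sb B f g \<longleftrightarrow>
     (\<exists>h. (\<forall>n. \<forall>x\<in>carr A n. h n x \<in> carr B (n + 1)) \<and>
          (\<forall>n. lin_on sa sb (carr A n) (h n)) \<and>
          (\<forall>n. \<forall>x\<in>carr A n. f n x - g n x = diff B (n + 1) (h n x) + h (n - 1) (diff A n x)))"

definition chain_htpy_equiv where
  "chain_htpy_equiv sa A sb B f \<longleftrightarrow>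
     (\<exists>g. chain_map sb B sa A g \<and>
          chain_homotopic sa A sa A (\<lambda>n x. g n (f n x)) (\<lambda>n x. x) \<and>
          chain_homotopic sb B sb B (\<lambda>n x. f n (g n x)) (\<lambda>n x. x))"

end

theory Submission
  imports Defs
begin

text \<open>Chain maps out of \<open>D\<^sup>n\<close> and \<open>S\<^sup>n\<^sup>-\<^sup>1\<close> are determined by the image of \<open>1 \<in> R\<close>, an
element of \<open>E\<^sub>n\<close> resp. an \<open>(n-1)\<close>-cycle. So the enriched lifting property against
\<open>S\<^sup>n\<^sup>-\<^sup>1 \<rightarrow> D\<^sup>n\<close> says that \<open>x \<mapsto> (dx, px)\<close>, from \<open>E\<^sub>n\<close> to the module of pairs \<open>(c, b)\<close> with
\<open>dc = 0\<close> and \<open>pc = db\<close>, has an \<open>R\<close>-linear section \<open>L\<^sub>n\<close>. Both sides of the equivalence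
amount to a chain map \<open>s\<close> with \<open>ps = id\<close> and \<open>sp \<simeq> id\<close>. Given the \<open>L\<^sub>n\<close>, take
\<open>s b = L(L(0, db), b)\<close>; applied to cycles of \<open>ker p\<close>, the \<open>L\<^sub>n\<close> contract \<open>ker p\<close>, which
contains \<open>sp - id\<close>. Given a homotopy inverse \<open>g\<close>, a degreewise splitting \<open>\<sigma>\<close> and a
homotopy \<open>L : pg \<simeq> id\<close> correct \<open>g\<close> to \<open>s = g - d\<sigma>L - \<sigma>Ld\<close>. Given \<open>s\<close> and \<open>H : sp \<simeq> id\<close>,
a section is \<open>L(c, b) = sb + Hk - spHk\<close> with \<open>k = dsb - c\<close>.\<close>

definition prod_scale :: "('r \<Rightarrow> 'a \<Rightarrow> 'a) \<Rightarrow> ('r \<Rightarrow> 'b \<Rightarrow> 'b) \<Rightarrow> 'r \<Rightarrow> 'a \<times> 'b \<Rightarrow> 'a \<times> 'b"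
  where "prod_scale sa sb r z = (sa r (fst z), sb r (snd z))"

lemma lin_onI:
  "(\<And>x y. x \<in> S \<Longrightarrow> y \<in> S \<Longrightarrow> f (x + y) = f x + f y) \<Longrightarrow>
   (\<And>r x. x \<in> S \<Longrightarrow> f (sa r x) = sb r (f x)) \<Longrightarrow> lin_on sa sb S f"
  unfolding lin_on_def by blast

lemma lin_on_add: "lin_on sa sb S f \<Longrightarrow> x \<in> S \<Longrightarrow> y \<in> S \<Longrightarrow> f (x + y) = f x + f y"
  unfolding lin_on_def by blast

lemma lin_on_scale: "lin_on sa sb S f \<Longrightarrow> x \<in> S \<Longrightarrow> f (sa r x) = sb r (f x)"
  unfolding lin_on_def by blast

lemma lin_on_zero:
  fixes f :: "'a::ab_group_add \<Rightarrow> 'b::ab_group_add"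
  shows "lin_on sa sb S f \<Longrightarrow> 0 \<in> S \<Longrightarrow> f 0 = 0"
  using lin_on_add[of sa sb S f 0 0] by simp

lemma lin_on_diff:
  fixes f :: "'a::ab_group_add \<Rightarrow> 'b::ab_group_add"
  shows "lin_on sa sb S f \<Longrightarrow> y \<in> S \<Longrightarrow> x - y \<in> S \<Longrightarrow> f (x - y) = f x - f y"
  using lin_on_add[of sa sb S f "x - y" y] by (simp add: algebra_simps)

lemma lin_on_uminus:
  fixes f :: "'a::ab_group_add \<Rightarrow> 'b::ab_group_add"
  shows "lin_on sa sb S f \<Longrightarrow> x \<in> S \<Longrightarrow> 0 \<in> S \<Longrightarrow> - x \<in> S \<Longrightarrow> f (- x) = - f x"
  using lin_on_diff[of sa sb S f x 0] lin_on_zero[of sa sb S f] by simp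

lemma lin_on_comp:
  "lin_on sa sb S f \<Longrightarrow> lin_on sb sc T g \<Longrightarrow> (\<And>x. x \<in> S \<Longrightarrow> f x \<in> T) \<Longrightarrow>
   lin_on sa sc S (\<lambda>x. g (f x))"
  unfolding lin_on_def by simp

lemma lin_on_plus:
  fixes f :: "'a::plus \<Rightarrow> 'b::ab_group_add"
  shows "module sb \<Longrightarrow> lin_on sa sb S f \<Longrightarrow> lin_on sa sb S g \<Longrightarrow> lin_on sa sb S (\<lambda>x. f x + g x)"
  unfolding lin_on_def by (simp add: module.scale_right_distrib algebra_simps)

lemma lin_on_minus:
  fixes f :: "'a::plus \<Rightarrow> 'b::ab_group_add"
  shows "module sb \<Longrightarrow> lin_on sa sb S f \<Longrightarrow> lin_on sa sb S g \<Longrightarrow> lin_on sa sb S (\<lambda>x. f x - g x)"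
  unfolding lin_on_def by (simp add: module.scale_right_diff_distrib algebra_simps)

lemma lin_on_id: "lin_on s s S (\<lambda>x. x)"
  unfolding lin_on_def by simp

lemma lin_on_const_zero: "module sb \<Longrightarrow> lin_on sa sb S (\<lambda>x. 0)"
  unfolding lin_on_def by (simp add: module.scale_zero_right)

lemma lin_on_subset: "lin_on sa sb S f \<Longrightarrow> T \<subseteq> S \<Longrightarrow> lin_on sa sb T f"
  unfolding lin_on_def by blast

lemma lin_on_pair:
  "lin_on sa sb S f \<Longrightarrow> lin_on sa sc S g \<Longrightarrow> lin_on sa (prod_scale sb sc) S (\<lambda>x. (f x, g x))"
  unfolding lin_on_def prod_scale_def by simp

lemma lin_on_fst: "lin_on (prod_scale sa sb) sa S fst"
  unfolding lin_on_def prod_scale_def by simp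

lemma lin_on_snd: "lin_on (prod_scale sa sb) sb S snd"
  unfolding lin_on_def prod_scale_def by simp

lemma lin_on_cong:
  "lin_on sa sb S f \<Longrightarrow> (\<And>x. x \<in> S \<Longrightarrow> f x = g x) \<Longrightarrow> (\<And>x y. x \<in> S \<Longrightarrow> y \<in> S \<Longrightarrow> x + y \<in> S) \<Longrightarrow>
   (\<And>r x. x \<in> S \<Longrightarrow> sa r x \<in> S) \<Longrightarrow> lin_on sa sb S g"
  unfolding lin_on_def by simp

lemma carr_sphere_dg [simp]: "carr (sphere_dg n) k = (if k = n - 1 then UNIV else {0})"
  and diff_sphere_dg [simp]: "diff (sphere_dg n) k x = 0"
  and carr_disk_dg [simp]: "carr (disk_dg n) k = (if k = n \<or> k = n - 1 then UNIV else {0})"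
  and diff_disk_dg [simp]: "diff (disk_dg n) k x = (if k = n then x else 0)"
  and sphere_incl_apply: "sphere_incl n k x = (if k = n - 1 then x else 0)"
  by (simp_all add: carr_def diff_def sphere_dg_def disk_dg_def sphere_incl_def)

locale dg_complex =
  fixes sM :: "'r::comm_ring_1 \<Rightarrow> 'm::ab_group_add \<Rightarrow> 'm" and M :: "'m dg"
  assumes dg_module: "dg_module sM M"
begin

sublocale module sM
  using dg_module by (simp add: dg_module_def)

lemma subspace_carr: "subspace (carr M n)"
  using dg_module by (simp add: dg_module_def)

lemma zero_mem [simp]: "0 \<in> carr M n"
  using subspace_0[OF subspace_carr] .

lemma add_mem [simp]: "x \<in> carr M n \<Longrightarrow> y \<in> carr M n \<Longrightarrow> x + y \<in> carr M n"
  using subspace_add[OF subspace_carr] .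

lemma diff_mem [simp]: "x \<in> carr M n \<Longrightarrow> y \<in> carr M n \<Longrightarrow> x - y \<in> carr M n"
  using subspace_diff[OF subspace_carr] .

lemma neg_mem [simp]: "x \<in> carr M n \<Longrightarrow> - x \<in> carr M n"
  using subspace_neg[OF subspace_carr] .

lemma scale_mem [simp]: "x \<in> carr M n \<Longrightarrow> sM r x \<in> carr M n"
  using subspace_scale[OF subspace_carr] .

lemma d_mem [simp]: "x \<in> carr M n \<Longrightarrow> diff M n x \<in> carr M (n - 1)"
  and lin_on_d: "lin_on sM sM (carr M n) (diff M n)"
  and d_d [simp]: "x \<in> carr M n \<Longrightarrow> diff M (n - 1) (diff M n x) = 0"
  using dg_module by (simp_all add: dg_module_def)

lemma d_zero [simp]: "diff M n 0 = 0"
  using lin_on_zero[OF lin_on_d] by simp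

lemma d_add [simp]: "x \<in> carr M n \<Longrightarrow> y \<in> carr M n \<Longrightarrow> diff M n (x + y) = diff M n x + diff M n y"
  using lin_on_add[OF lin_on_d] .

lemma d_diff [simp]: "x \<in> carr M n \<Longrightarrow> y \<in> carr M n \<Longrightarrow> diff M n (x - y) = diff M n x - diff M n y"
  using lin_on_diff[OF lin_on_d] by simp

lemma d_scale [simp]: "x \<in> carr M n \<Longrightarrow> diff M n (sM r x) = sM r (diff M n x)"
  using lin_on_scale[OF lin_on_d] .

text \<open>\<open>D\<^sup>n\<close> and \<open>S\<^sup>n\<^sup>-\<^sup>1\<close> corepresent \<open>M\<^sub>n\<close> and the \<open>(n-1)\<close>-cycles of \<open>M\<close>: these are the
chain maps sending \<open>1\<close> to \<open>e\<close> resp. \<open>c\<close>.\<close>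

definition disk_map :: "int \<Rightarrow> 'm \<Rightarrow> int \<Rightarrow> 'r \<Rightarrow> 'm" where
  "disk_map n e = (\<lambda>k x. if k = n then sM x e else if k = n - 1 then sM x (diff M n e) else 0)"

definition sphere_map :: "int \<Rightarrow> 'm \<Rightarrow> int \<Rightarrow> 'r \<Rightarrow> 'm" where
  "sphere_map n c = (\<lambda>k x. if k = n - 1 then sM x c else 0)"

lemma chain_map_disk_map:
  assumes e: "e \<in> carr M n"
  shows "chain_map (*) (disk_dg n) sM M (disk_map n e)"
  unfolding chain_map_def
proof (intro conjI allI ballI impI)
  fix k x
  show "disk_map n e k x \<in> carr M k"
    using e by (auto simp: disk_map_def)
next
  fix k
  show "lin_on (*) sM (carr (disk_dg n) k) (disk_map n e k)"
    unfolding lin_on_def disk_map_def by (simp add: scale_left_distrib)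
next
  fix k and x :: 'r
  show "disk_map n e (k - 1) (diff (disk_dg n) k x) = diff M k (disk_map n e k x)"
    using e by (auto simp: disk_map_def)
next
  fix k and x :: 'r
  assume "x \<notin> carr (disk_dg n) k"
  then show "disk_map n e k x = 0"
    by (auto simp: disk_map_def split: if_splits)
qed

lemma chain_map_sphere_map:
  assumes c: "c \<in> carr M (n - 1)" and dc: "diff M (n - 1) c = 0"
  shows "chain_map (*) (sphere_dg n) sM M (sphere_map n c)"
  unfolding chain_map_def
proof (intro conjI allI ballI impI)
  fix k x
  show "sphere_map n c k x \<in> carr M k"
    using c by (auto simp: sphere_map_def)
next
  fix k
  show "lin_on (*) sM (carr (sphere_dg n) k) (sphere_map n c k)"
    unfolding lin_on_def sphere_map_def by (simp add: scale_left_distrib)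
next
  fix k and x :: 'r
  show "sphere_map n c (k - 1) (diff (sphere_dg n) k x) = diff M k (sphere_map n c k x)"
    using c dc by (auto simp: sphere_map_def)
next
  fix k and x :: 'r
  assume "x \<notin> carr (sphere_dg n) k"
  then show "sphere_map n c k x = 0"
    by (auto simp: sphere_map_def split: if_splits)
qed

lemma chain_map_disk_eq:
  assumes f: "chain_map (*) (disk_dg n) sM M f"
  shows "f = disk_map n (f n 1)" and "f n 1 \<in> carr M n"
proof -
  have lin: "\<And>k. lin_on (*) sM (carr (disk_dg n) k) (f k)"
    and ext0: "\<And>k x. x \<notin> carr (disk_dg n) k \<Longrightarrow> f k x = 0"
    and comm: "\<And>k x. x \<in> carr (disk_dg n) k \<Longrightarrow> f (k - 1) (diff (disk_dg n) k x) = diff M k (f k x)"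
    and mem: "\<And>k x. x \<in> carr (disk_dg n) k \<Longrightarrow> f k x \<in> carr M k"
    using f unfolding chain_map_def by auto
  show "f n 1 \<in> carr M n"
    using mem by simp
  have f1: "f (n - 1) 1 = diff M n (f n 1)"
    using comm[of 1 n] by simp
  show "f = disk_map n (f n 1)"
  proof (intro ext)
    fix k x
    show "f k x = disk_map n (f n 1) k x"
    proof (cases "k = n \<or> k = n - 1")
      case True
      have "f k (x * 1) = sM x (f k 1)"
        using lin_on_scale[OF lin, of 1 k x] True by simp
      then show ?thesis
        using True f1 unfolding disk_map_def by auto
    next
      case False
      then show ?thesis
        using ext0[of x k] lin_on_zero[OF lin[of k]] unfolding disk_map_def by (cases "x = 0") auto
    qed
  qed
qed

lemma chain_map_sphere_eq:
  assumes f: "chain_map (*) (sphere_dg n) sM M f"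
  shows "f = sphere_map n (f (n - 1) 1)" and "f (n - 1) 1 \<in> carr M (n - 1)"
    and "diff M (n - 1) (f (n - 1) 1) = 0"
proof -
  have lin: "\<And>k. lin_on (*) sM (carr (sphere_dg n) k) (f k)"
    and ext0: "\<And>k x. x \<notin> carr (sphere_dg n) k \<Longrightarrow> f k x = 0"
    and comm: "\<And>k x. x \<in> carr (sphere_dg n) k \<Longrightarrow> f (k - 1) (diff (sphere_dg n) k x) = diff M k (f k x)"
    and mem: "\<And>k x. x \<in> carr (sphere_dg n) k \<Longrightarrow> f k x \<in> carr M k"
    using f unfolding chain_map_def by auto
  show "f (n - 1) 1 \<in> carr M (n - 1)"
    using mem by simp
  have f0: "\<And>k. f k 0 = 0"
    using lin_on_zero[OF lin] by simp
  show "diff M (n - 1) (f (n - 1) 1) = 0"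
    using comm[of 1 "n - 1"] f0 by simp
  show "f = sphere_map n (f (n - 1) 1)"
  proof (intro ext)
    fix k x
    show "f k x = sphere_map n (f (n - 1) 1) k x"
    proof (cases "k = n - 1")
      case True
      have "f k (x * 1) = sM x (f k 1)"
        using lin_on_scale[OF lin, of 1 k x] True by simp
      then show ?thesis
        using True unfolding sphere_map_def by auto
    next
      case False
      then show ?thesis
        using ext0[of x k] f0[of k] unfolding sphere_map_def by (cases "x = 0") auto
    qed
  qed
qed

end

locale dg_map = E: dg_complex sE E + B: dg_complex sB B
  for sE :: "'r::comm_ring_1 \<Rightarrow> 'e::ab_group_add \<Rightarrow> 'e" and E :: "'e dg"
    and sB :: "'r \<Rightarrow> 'b::ab_group_add \<Rightarrow> 'b" and B :: "'b dg" +
  fixes p :: "int \<Rightarrow> 'e \<Rightarrow> 'b"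
  assumes chain_map: "chain_map sE E sB B p"
begin

lemma p_mem [simp]: "x \<in> carr E n \<Longrightarrow> p n x \<in> carr B n"
  and lin_on_p: "lin_on sE sB (carr E n) (p n)"
  and p_d: "x \<in> carr E n \<Longrightarrow> p (n - 1) (diff E n x) = diff B n (p n x)"
  using chain_map unfolding chain_map_def by auto

lemma p_zero [simp]: "p n 0 = 0"
  using lin_on_zero[OF lin_on_p] by simp

lemma p_add [simp]: "x \<in> carr E n \<Longrightarrow> y \<in> carr E n \<Longrightarrow> p n (x + y) = p n x + p n y"
  using lin_on_add[OF lin_on_p] .

lemma p_diff [simp]: "x \<in> carr E n \<Longrightarrow> y \<in> carr E n \<Longrightarrow> p n (x - y) = p n x - p n y"
  using lin_on_diff[OF lin_on_p] by simp

lemma p_uminus [simp]: "x \<in> carr E n \<Longrightarrow> p n (- x) = - p n x"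
  using lin_on_uminus[OF lin_on_p] by simp

lemma p_scale [simp]: "x \<in> carr E n \<Longrightarrow> p n (sE r x) = sB r (p n x)"
  using lin_on_scale[OF lin_on_p] .

text \<open>\<open>Sq(S\<^sup>n\<^sup>-\<^sup>1 \<rightarrow> D\<^sup>n, p)\<close>, via the values of its two components at \<open>1 \<in> R\<close>.\<close>

definition square :: "int \<Rightarrow> ('e \<times> 'b) set" where
  "square n = {z. fst z \<in> carr E (n - 1) \<and> diff E (n - 1) (fst z) = 0 \<and>
                  snd z \<in> carr B n \<and> p (n - 1) (fst z) = diff B n (snd z)}"

definition square_section :: "int \<Rightarrow> ('e \<times> 'b \<Rightarrow> 'e) \<Rightarrow> bool" where
  "square_section n l \<longleftrightarrow>
     (\<forall>z\<in>square n. l z \<in> carr E n \<and> diff E n (l z) = fst z \<and> p n (l z) = snd z) \<and>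
     lin_on (prod_scale sE sB) sE (square n) l"

definition chain_section :: "(int \<Rightarrow> 'b \<Rightarrow> 'e) \<Rightarrow> bool" where
  "chain_section s \<longleftrightarrow>
     (\<forall>n. \<forall>y\<in>carr B n. s n y \<in> carr E n \<and> p n (s n y) = y \<and> diff E n (s n y) = s (n - 1) (diff B n y)) \<and>
     (\<forall>n. lin_on sB sE (carr B n) (s n))"

abbreviation Sq :: "int \<Rightarrow> ((int \<Rightarrow> 'r \<Rightarrow> 'e) \<times> (int \<Rightarrow> 'r \<Rightarrow> 'b)) set" where
  "Sq n \<equiv> sq_dg (*) (sphere_dg n) (*) (disk_dg n) (sphere_incl n) sE E sB B p"

lemma square_zero: "(0, 0) \<in> square n"
  unfolding square_def by simp

lemma square_section_zero: "square_section n l \<Longrightarrow> l (0, 0) = 0"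
  unfolding square_section_def using lin_on_zero square_zero by (metis zero_prod_def)

lemma sphere_disk_maps_in_Sq:
  assumes "z \<in> square n"
  shows "(E.sphere_map n (fst z), B.disk_map n (snd z)) \<in> Sq n"
proof -
  have z: "fst z \<in> carr E (n - 1)" "diff E (n - 1) (fst z) = 0" "snd z \<in> carr B n"
    "p (n - 1) (fst z) = diff B n (snd z)"
    using assms unfolding square_def by auto
  have "(\<lambda>k x. p k (E.sphere_map n (fst z) k x)) = (\<lambda>k x. B.disk_map n (snd z) k (sphere_incl n k x))"
    using z by (intro ext) (auto simp: E.sphere_map_def B.disk_map_def sphere_incl_apply)
  then show ?thesis
    unfolding sq_dg_def hom_dg_def using E.chain_map_sphere_map[OF z(1,2)] B.chain_map_disk_map[OF z(3)]
    by simp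
qed

lemma Sq_determined_by_values:
  assumes "(a, b) \<in> Sq n"
  shows "(a (n - 1) 1, b n 1) \<in> square n" and "a = E.sphere_map n (a (n - 1) 1)"
    and "b = B.disk_map n (b n 1)"
proof -
  have a: "chain_map (*) (sphere_dg n) sE E a" and b: "chain_map (*) (disk_dg n) sB B b"
    and comm: "(\<lambda>k x. p k (a k x)) = (\<lambda>k x. b k (sphere_incl n k x))"
    using assms unfolding sq_dg_def hom_dg_def by auto
  show a_eq: "a = E.sphere_map n (a (n - 1) 1)" and b_eq: "b = B.disk_map n (b n 1)"
    using E.chain_map_sphere_eq(1)[OF a] B.chain_map_disk_eq(1)[OF b] .
  have "p (n - 1) (a (n - 1) 1) = b (n - 1) (sphere_incl n (n - 1) 1)"
    using fun_cong[OF fun_cong[OF comm]] by simp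
  also have "\<dots> = diff B n (b n 1)"
    by (subst b_eq) (simp add: sphere_incl_apply B.disk_map_def)
  finally show "(a (n - 1) 1, b n 1) \<in> square n"
    using E.chain_map_sphere_eq(2,3)[OF a] B.chain_map_disk_eq(2)[OF b] unfolding square_def by simp
qed

lemma enriched_rlp_imp_square_section:
  assumes "enriched_rlp (*) (sphere_dg n) (*) (disk_dg n) (sphere_incl n) sE E sB B p"
  shows "\<exists>l. square_section n l"
proof -
  obtain s where s_hom: "\<And>z. z \<in> Sq n \<Longrightarrow> s z \<in> hom_dg (*) (disk_dg n) sE E"
    and s_lin: "lin_on (pscale sE sB) (hscale sE) (Sq n) s"
    and s_sec: "\<And>z. z \<in> Sq n \<Longrightarrow> sq_induced (sphere_incl n) p (s z) = z"
    using assms unfolding enriched_rlp_def by blast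
  define w where "w z = (E.sphere_map n (fst z), B.disk_map n (snd z))" for z
  have w_Sq: "\<And>z. z \<in> square n \<Longrightarrow> w z \<in> Sq n"
    unfolding w_def by (rule sphere_disk_maps_in_Sq)
  define l where "l z = s (w z) n 1" for z
  have l_lifts: "l z \<in> carr E n \<and> diff E n (l z) = fst z \<and> p n (l z) = snd z" if z: "z \<in> square n" for z
  proof -
    have f: "chain_map (*) (disk_dg n) sE E (s (w z))"
      using s_hom[OF w_Sq[OF z]] unfolding hom_dg_def by simp
    have restr: "(\<lambda>k x. s (w z) k (sphere_incl n k x)) = E.sphere_map n (fst z)"
      and proj: "(\<lambda>k x. p k (s (w z) k x)) = B.disk_map n (snd z)"
      using s_sec[OF w_Sq[OF z]] unfolding sq_induced_def w_def by auto
    have "diff E n (l z) = s (w z) (n - 1) (sphere_incl n (n - 1) 1)"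
      using f unfolding chain_map_def l_def by (auto simp: sphere_incl_apply dest: spec[of _ n])
    also have "\<dots> = fst z"
      using fun_cong[OF fun_cong[OF restr, of "n - 1"], of 1] by (simp add: E.sphere_map_def)
    finally have "diff E n (l z) = fst z" .
    moreover have "p n (l z) = snd z"
      using fun_cong[OF fun_cong[OF proj, of n], of 1] unfolding l_def by (simp add: B.disk_map_def)
    ultimately show ?thesis
      using E.chain_map_disk_eq(2)[OF f] unfolding l_def by simp
  qed
  have w_add: "w (z + z') = w z + w z'" if "z \<in> square n" "z' \<in> square n" for z z'
    using that unfolding w_def
    by (intro prod_eqI ext) (auto simp: E.sphere_map_def B.disk_map_def E.scale_right_distrib
        B.scale_right_distrib square_def)
  have w_scale: "w (prod_scale sE sB r z) = pscale sE sB r (w z)" if "z \<in> square n" for z r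
    using that unfolding w_def pscale_def prod_scale_def hscale_def
    by (intro prod_eqI ext) (auto simp: E.sphere_map_def B.disk_map_def mult.commute square_def)
  have "lin_on (prod_scale sE sB) sE (square n) l"
  proof (rule lin_onI)
    fix z z' assume "z \<in> square n" "z' \<in> square n"
    then show "l (z + z') = l z + l z'"
      unfolding l_def by (simp add: w_add lin_on_add[OF s_lin] w_Sq)
  next
    fix r z assume "z \<in> square n"
    then show "l (prod_scale sE sB r z) = sE r (l z)"
      unfolding l_def by (simp add: w_scale lin_on_scale[OF s_lin] w_Sq hscale_def)
  qed
  then show ?thesis
    unfolding square_section_def using l_lifts by blast
qed

lemma square_section_imp_enriched_rlp:
  assumes "square_section n l"
  shows "enriched_rlp (*) (sphere_dg n) (*) (disk_dg n) (sphere_incl n) sE E sB B p"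
proof -
  have l_lifts: "\<And>z. z \<in> square n \<Longrightarrow> l z \<in> carr E n \<and> diff E n (l z) = fst z \<and> p n (l z) = snd z"
    and l_lin: "lin_on (prod_scale sE sB) sE (square n) l"
    using assms unfolding square_section_def by auto
  define v where "v z = (fst z (n - 1) 1, snd z n 1)" for z :: "(int \<Rightarrow> 'r \<Rightarrow> 'e) \<times> (int \<Rightarrow> 'r \<Rightarrow> 'b)"
  define s where "s z = E.disk_map n (l (v z))" for z
  have v_square: "v z \<in> square n" and z_eq: "z = (E.sphere_map n (fst (v z)), B.disk_map n (snd (v z)))"
    if "z \<in> Sq n" for z
    using Sq_determined_by_values[of "fst z" "snd z"] that unfolding v_def by auto
  have s_hom: "s z \<in> hom_dg (*) (disk_dg n) sE E" if "z \<in> Sq n" for z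
    unfolding s_def hom_dg_def using E.chain_map_disk_map l_lifts v_square[OF that] by blast
  have s_sec: "sq_induced (sphere_incl n) p (s z) = z" if z: "z \<in> Sq n" for z
  proof -
    obtain c b where vz: "v z = (c, b)"
      by (cases "v z")
    have e: "l (c, b) \<in> carr E n" "diff E n (l (c, b)) = c" "p n (l (c, b)) = b"
      using l_lifts v_square[OF z] vz by auto
    have c: "c \<in> carr E (n - 1)"
      using v_square[OF z] vz unfolding square_def by simp
    have "p (n - 1) (diff E n (l (c, b))) = diff B n b"
      using p_d[OF e(1)] e(3) by simp
    then have "sq_induced (sphere_incl n) p (s z) = (E.sphere_map n c, B.disk_map n b)"
      unfolding sq_induced_def s_def vz using e c
      by (auto simp: E.disk_map_def E.sphere_map_def B.disk_map_def sphere_incl_apply intro!: ext)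
    also have "\<dots> = z"
      using z_eq[OF z] vz by simp
    finally show ?thesis .
  qed
  have "lin_on (pscale sE sB) (hscale sE) (Sq n) s"
  proof (rule lin_onI)
    fix z z' assume z: "z \<in> Sq n" and z': "z' \<in> Sq n"
    have "v (z + z') = v z + v z'"
      unfolding v_def by simp
    moreover have "l (v z) \<in> carr E n" "l (v z') \<in> carr E n"
      using l_lifts v_square[OF z] v_square[OF z'] by blast+
    ultimately show "s (z + z') = s z + s z'"
      unfolding s_def using v_square[OF z] v_square[OF z']
      by (auto simp: lin_on_add[OF l_lin] E.disk_map_def E.scale_right_distrib intro!: ext)
  next
    fix r z assume z: "z \<in> Sq n"
    have "v (pscale sE sB r z) = prod_scale sE sB r (v z)"
      unfolding v_def pscale_def prod_scale_def hscale_def by simp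
    moreover have "l (v z) \<in> carr E n"
      using l_lifts v_square[OF z] by blast
    ultimately show "s (pscale sE sB r z) = hscale sE r (s z)"
      unfolding s_def using v_square[OF z]
      by (auto simp: lin_on_scale[OF l_lin] E.disk_map_def hscale_def mult.commute intro!: ext)
  qed
  then show ?thesis
    unfolding enriched_rlp_def using s_hom s_sec by blast
qed

lemma square_sections_chain_section:
  assumes L: "\<And>n. square_section n (L n)"
  shows "chain_section (\<lambda>n b. L n (L (n - 1) (0, diff B n b), b))"
proof -
  have L_lifts: "\<And>n z. z \<in> square n \<Longrightarrow> L n z \<in> carr E n \<and> diff E n (L n z) = fst z \<and> p n (L n z) = snd z"
    and L_lin: "\<And>n. lin_on (prod_scale sE sB) sE (square n) (L n)"
    using L unfolding square_section_def by blast+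
  have boundary_in_square: "(0, diff B n b) \<in> square (n - 1)" if "b \<in> carr B n" for n b
    using that unfolding square_def by simp
  have lift_in_square: "(L (n - 1) (0, diff B n b), b) \<in> square n" if "b \<in> carr B n" for n b
    using L_lifts[OF boundary_in_square[OF that]] that unfolding square_def by simp
  have "lin_on sB sE (carr B n) (\<lambda>b. L n (L (n - 1) (0, diff B n b), b))" for n
  proof -
    have "lin_on sB sE (carr B n) (\<lambda>b. L (n - 1) (0, diff B n b))"
      by (rule lin_on_comp[OF lin_on_pair[OF lin_on_const_zero[OF E.module_axioms] B.lin_on_d] L_lin boundary_in_square])
    then show ?thesis
      by (rule lin_on_comp[OF lin_on_pair[OF _ lin_on_id] L_lin lift_in_square])
  qed
  then show ?thesis
    unfolding chain_section_def using L_lifts[OF lift_in_square] L_lifts[OF boundary_in_square] square_section_zero[OF L] by simp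
qed

lemma square_sections_homotopy:
  assumes L: "\<And>n. square_section n (L n)" and s: "chain_section s"
  shows "chain_homotopic sE E sE E (\<lambda>n x. s n (p n x)) (\<lambda>n x. x)"
proof -
  have L_lifts: "\<And>n z. z \<in> square n \<Longrightarrow> L n z \<in> carr E n \<and> diff E n (L n z) = fst z \<and> p n (L n z) = snd z"
    and L_lin: "\<And>n. lin_on (prod_scale sE sB) sE (square n) (L n)"
    using L unfolding square_section_def by blast+
  have s_mem: "\<And>n y. y \<in> carr B n \<Longrightarrow> s n y \<in> carr E n \<and> p n (s n y) = y"
    and s_d: "\<And>n y. y \<in> carr B n \<Longrightarrow> diff E n (s n y) = s (n - 1) (diff B n y)"
    and s_lin: "\<And>n. lin_on sB sE (carr B n) (s n)"
    using s unfolding chain_section_def by blast+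
  txt \<open>\<open>k x\<close> lies in \<open>ker p\<close>; subtracting a lift of its boundary makes it a cycle of \<open>ker p\<close>,
    which is then the boundary of \<open>H x\<close>.\<close>
  define k where "k n x = s n (p n x) - x" for n x
  define K where "K n x = k n x - L n (diff E n (k n x), 0)" for n x
  define H where "H n x = L (n + 1) (K n x, 0)" for n x
  have k: "k n x \<in> carr E n \<and> p n (k n x) = 0" if "x \<in> carr E n" for n x
    using s_mem that unfolding k_def by simp
  have ker_square: "(diff E n x, 0) \<in> square n" if "x \<in> carr E n" "p n x = 0" for n x
    using that unfolding square_def by (simp add: p_d)
  have K_square: "(K n x, 0) \<in> square (n + 1)" if "x \<in> carr E n" for n x
    using k[OF that] L_lifts[OF ker_square] unfolding square_def K_def by simp
  have H: "H n x \<in> carr E (n + 1) \<and> diff E (n + 1) (H n x) = K n x" if "x \<in> carr E n" for n x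
    using L_lifts[OF K_square[OF that]] unfolding H_def by simp
  have K_d: "K (n - 1) (diff E n x) = diff E n (k n x)" if "x \<in> carr E n" for n x
  proof -
    have "k (n - 1) (diff E n x) = diff E n (k n x)"
      using s_mem s_d that unfolding k_def by (simp add: p_d)
    then show ?thesis
      using k[OF that] that square_section_zero[OF L] unfolding K_def by simp
  qed
  have H_lin: "lin_on sE sE (carr E n) (H n)" for n
  proof -
    let ?ker = "{x. x \<in> carr E n \<and> p n x = 0}"
    have k_lin: "lin_on sE sE (carr E n) (k n)"
      unfolding k_def[abs_def] by (rule lin_on_minus[OF E.module_axioms lin_on_comp[OF lin_on_p s_lin] lin_on_id]) simp
    have "lin_on sE (prod_scale sE sB) ?ker (\<lambda>x. (diff E n x, 0))"
      by (rule lin_on_subset[OF lin_on_pair[OF E.lin_on_d lin_on_const_zero[OF B.module_axioms]]]) auto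
    then have "lin_on sE sE ?ker (\<lambda>x. L n (diff E n x, 0))"
      by (rule lin_on_comp[OF _ L_lin]) (simp add: ker_square)
    then have "lin_on sE sE (carr E n) (K n)"
      unfolding K_def[abs_def] by (rule lin_on_minus[OF E.module_axioms k_lin lin_on_comp[OF k_lin]]) (simp add: k)
    then show ?thesis
      unfolding H_def[abs_def]
      by (rule lin_on_comp[OF lin_on_pair[OF _ lin_on_const_zero[OF B.module_axioms]] L_lin K_square])
  qed
  show ?thesis
    unfolding chain_homotopic_def
  proof (intro exI[of _ H] conjI allI ballI)
    fix n x assume x: "x \<in> carr E n"
    show "H n x \<in> carr E (n + 1)"
      using H[OF x] by simp
    have "H (n - 1) (diff E n x) = L n (diff E n (k n x), 0)"
      using K_d[OF x] unfolding H_def by simp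
    then show "s n (p n x) - x = diff E (n + 1) (H n x) + H (n - 1) (diff E n x)"
      using H[OF x] unfolding K_def k_def by simp
  qed (rule H_lin)
qed

lemma chain_section_imp_split_htpy_equiv:
  assumes s: "chain_section s" and hs: "chain_homotopic sE E sE E (\<lambda>n x. s n (p n x)) (\<lambda>n x. x)"
  shows "degreewise_split_epi sE E sB B p \<and> chain_htpy_equiv sE E sB B p"
proof -
  have s_mem: "\<And>n y. y \<in> carr B n \<Longrightarrow> s n y \<in> carr E n \<and> p n (s n y) = y"
    and s_d: "\<And>n y. y \<in> carr B n \<Longrightarrow> diff E n (s n y) = s (n - 1) (diff B n y)"
    and s_lin: "\<And>n. lin_on sB sE (carr B n) (s n)"
    using s unfolding chain_section_def by blast+
  have split: "degreewise_split_epi sE E sB B p"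
    unfolding degreewise_split_epi_def using s_mem s_lin by blast
  txt \<open>Chain maps are extensional, so \<open>s\<close> has to be cut off outside the carriers.\<close>
  define g where "g n b = (if b \<in> carr B n then s n b else 0)" for n b
  have "chain_map sB B sE E g"
    unfolding chain_map_def
  proof (intro conjI allI ballI impI)
    fix n show "lin_on sB sE (carr B n) (g n)"
      by (rule lin_on_cong[OF s_lin]) (auto simp: g_def)
  qed (simp_all add: g_def s_mem s_d)
  moreover have "chain_homotopic sB B sB B (\<lambda>n x. p n (g n x)) (\<lambda>n x. x)"
    unfolding chain_homotopic_def
    by (rule exI[of _ "\<lambda>n x. 0"]) (simp add: lin_on_const_zero[OF B.module_axioms] g_def s_mem)
  moreover have "chain_homotopic sE E sE E (\<lambda>n x. g n (p n x)) (\<lambda>n x. x)"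
    using hs unfolding chain_homotopic_def g_def by simp
  ultimately show ?thesis
    using split unfolding chain_htpy_equiv_def by blast
qed

lemma chain_section_of_homotopy_inverse:
  assumes \<sigma>_mem: "\<And>n y. y \<in> carr B n \<Longrightarrow> \<sigma> n y \<in> carr E n \<and> p n (\<sigma> n y) = y"
    and \<sigma>_lin: "\<And>n. lin_on sB sE (carr B n) (\<sigma> n)"
    and g: "chain_map sB B sE E g"
    and L_mem: "\<And>n y. y \<in> carr B n \<Longrightarrow> L n y \<in> carr B (n + 1)"
    and L_lin: "\<And>n. lin_on sB sB (carr B n) (L n)"
    and L_htpy: "\<And>n y. y \<in> carr B n \<Longrightarrow> p n (g n y) - y = diff B (n + 1) (L n y) + L (n - 1) (diff B n y)"
  shows "chain_section (\<lambda>n y. g n y - diff E (n + 1) (\<sigma> (n + 1) (L n y)) - \<sigma> n (L (n - 1) (diff B n y)))"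
    (is "chain_section ?s")
proof -
  have g_mem: "\<And>n y. y \<in> carr B n \<Longrightarrow> g n y \<in> carr E n"
    and g_lin: "\<And>n. lin_on sB sE (carr B n) (g n)"
    and g_d: "\<And>n y. y \<in> carr B n \<Longrightarrow> g (n - 1) (diff B n y) = diff E n (g n y)"
    using g unfolding chain_map_def by auto
  have \<sigma>_zero: "\<sigma> n 0 = 0" and L_zero: "L n 0 = 0" for n
    using lin_on_zero[OF \<sigma>_lin] lin_on_zero[OF L_lin] by simp_all
  have mem: "\<sigma> (n + 1) (L n y) \<in> carr E (n + 1)" "L (n - 1) (diff B n y) \<in> carr B n"
    if "y \<in> carr B n" for n y
    using that \<sigma>_mem L_mem L_mem[of "diff B n y" "n - 1"] by simp_all
  have "?s n y \<in> carr E n \<and> p n (?s n y) = y \<and> diff E n (?s n y) = ?s (n - 1) (diff B n y)"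
    if y: "y \<in> carr B n" for n y
  proof -
    have d\<sigma>L: "diff E (n + 1) (\<sigma> (n + 1) (L n y)) \<in> carr E n"
      using E.d_mem[OF mem(1)[OF y]] by simp
    have "p n (diff E (n + 1) (\<sigma> (n + 1) (L n y))) = diff B (n + 1) (L n y)"
      using p_d[OF mem(1)[OF y]] \<sigma>_mem L_mem y by simp
    then have "p n (?s n y) = y"
      using y d\<sigma>L mem[OF y] \<sigma>_mem g_mem L_htpy[OF y] by (simp add: algebra_simps)
    moreover have "diff E n (diff E (n + 1) (\<sigma> (n + 1) (L n y))) = 0"
      using E.d_d[OF mem(1)[OF y]] by simp
    then have "diff E n (?s n y) = ?s (n - 1) (diff B n y)"
      using y d\<sigma>L mem[OF y] \<sigma>_mem g_mem g_d \<sigma>_zero L_zero by simp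
    ultimately show ?thesis
      using y d\<sigma>L mem[OF y] \<sigma>_mem g_mem by simp
  qed
  moreover have "lin_on sB sE (carr B n) (?s n)" for n
  proof -
    have "lin_on sB sE (carr B n) (\<lambda>y. diff E (n + 1) (\<sigma> (n + 1) (L n y)))"
      by (rule lin_on_comp[OF lin_on_comp[OF L_lin \<sigma>_lin] E.lin_on_d]) (simp_all add: L_mem \<sigma>_mem)
    moreover have "lin_on sB sE (carr B n) (\<lambda>y. \<sigma> n (L (n - 1) (diff B n y)))"
      by (rule lin_on_comp[OF lin_on_comp[OF B.lin_on_d L_lin] \<sigma>_lin]) (simp_all add: mem)
    ultimately show ?thesis
      by (intro lin_on_minus[OF E.module_axioms] g_lin)
  qed
  ultimately show ?thesis
    unfolding chain_section_def by blast
qed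

lemma htpy_equiv_imp_chain_section:
  assumes "degreewise_split_epi sE E sB B p" and "chain_htpy_equiv sE E sB B p"
  shows "\<exists>s. chain_section s \<and> chain_homotopic sE E sE E (\<lambda>n x. s n (p n x)) (\<lambda>n x. x)"
proof -
  obtain \<sigma> where \<sigma>_mem: "\<And>n y. y \<in> carr B n \<Longrightarrow> \<sigma> n y \<in> carr E n \<and> p n (\<sigma> n y) = y"
    and \<sigma>_lin: "\<And>n. lin_on sB sE (carr B n) (\<sigma> n)"
    using assms(1) unfolding degreewise_split_epi_def by metis
  obtain g where g: "chain_map sB B sE E g"
    and hE: "chain_homotopic sE E sE E (\<lambda>n x. g n (p n x)) (\<lambda>n x. x)"
    and hB: "chain_homotopic sB B sB B (\<lambda>n x. p n (g n x)) (\<lambda>n x. x)"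
    using assms(2) unfolding chain_htpy_equiv_def by blast
  obtain H where H_mem: "\<And>n x. x \<in> carr E n \<Longrightarrow> H n x \<in> carr E (n + 1)"
    and H_lin: "\<And>n. lin_on sE sE (carr E n) (H n)"
    and H_htpy: "\<And>n x. x \<in> carr E n \<Longrightarrow> g n (p n x) - x = diff E (n + 1) (H n x) + H (n - 1) (diff E n x)"
    using hE unfolding chain_homotopic_def by blast
  obtain L where L_mem: "\<And>n y. y \<in> carr B n \<Longrightarrow> L n y \<in> carr B (n + 1)"
    and L_lin: "\<And>n. lin_on sB sB (carr B n) (L n)"
    and L_htpy: "\<And>n y. y \<in> carr B n \<Longrightarrow> p n (g n y) - y = diff B (n + 1) (L n y) + L (n - 1) (diff B n y)"
    using hB unfolding chain_homotopic_def by blast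
  define s where "s n y = g n y - diff E (n + 1) (\<sigma> (n + 1) (L n y)) - \<sigma> n (L (n - 1) (diff B n y))" for n y
  have s: "chain_section s"
    unfolding s_def[abs_def] using \<sigma>_mem \<sigma>_lin g L_mem L_lin L_htpy by (rule chain_section_of_homotopy_inverse)
  define H' where "H' n x = H n x - \<sigma> (n + 1) (L n (p n x))" for n x
  have "chain_homotopic sE E sE E (\<lambda>n x. s n (p n x)) (\<lambda>n x. x)"
    unfolding chain_homotopic_def
  proof (intro exI[of _ H'] conjI allI ballI)
    fix n x assume x: "x \<in> carr E n"
    show "H' n x \<in> carr E (n + 1)"
      unfolding H'_def using x H_mem L_mem \<sigma>_mem by simp
    have "L (n - 1) (diff B n (p n x)) \<in> carr B n"
      using x L_mem[of "diff B n (p n x)" "n - 1"] by simp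
    then show "s n (p n x) - x = diff E (n + 1) (H' n x) + H' (n - 1) (diff E n x)"
      using H_htpy[OF x] x H_mem L_mem \<sigma>_mem unfolding s_def H'_def by (simp add: p_d)
  next
    fix n show "lin_on sE sE (carr E n) (H' n)"
      unfolding H'_def[abs_def]
      by (rule lin_on_minus[OF E.module_axioms H_lin lin_on_comp[OF lin_on_comp[OF lin_on_p L_lin] \<sigma>_lin]])
        (simp_all add: L_mem)
  qed
  with s show ?thesis
    by blast
qed

lemma chain_section_homotopy_imp_square_section:
  assumes s: "chain_section s" and hs: "chain_homotopic sE E sE E (\<lambda>n x. s n (p n x)) (\<lambda>n x. x)"
  shows "\<exists>l. square_section n l"
proof -
  have s_mem: "\<And>n y. y \<in> carr B n \<Longrightarrow> s n y \<in> carr E n \<and> p n (s n y) = y"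
    and s_d: "\<And>n y. y \<in> carr B n \<Longrightarrow> diff E n (s n y) = s (n - 1) (diff B n y)"
    and s_lin: "\<And>n. lin_on sB sE (carr B n) (s n)"
    using s unfolding chain_section_def by blast+
  have s_zero: "s n 0 = 0" for n
    using lin_on_zero[OF s_lin] by simp
  obtain H where H_mem: "\<And>n x. x \<in> carr E n \<Longrightarrow> H n x \<in> carr E (n + 1)"
    and H_lin: "\<And>n. lin_on sE sE (carr E n) (H n)"
    and H_htpy: "\<And>n x. x \<in> carr E n \<Longrightarrow> s n (p n x) - x = diff E (n + 1) (H n x) + H (n - 1) (diff E n x)"
    using hs unfolding chain_homotopic_def by blast
  have H_zero: "H n 0 = 0" for n
    using lin_on_zero[OF H_lin] by simp
  txt \<open>\<open>k z\<close> is a cycle of \<open>ker p\<close>, so \<open>H k\<close> has boundary \<open>-k\<close>; subtracting the cycle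
    \<open>s p H k\<close> restores \<open>p l = b\<close>.\<close>
  define k where "k z = diff E n (s n (snd z)) - fst z" for z
  define l where "l z = s n (snd z) + H (n - 1) (k z) - s n (p n (H (n - 1) (k z)))" for z
  have k: "k z \<in> carr E (n - 1) \<and> p (n - 1) (k z) = 0 \<and> diff E (n - 1) (k z) = 0" if z: "z \<in> square n" for z
  proof -
    have "s n (snd z) \<in> carr E n"
      using z s_mem unfolding square_def by simp
    then show ?thesis
      using z s_mem p_d unfolding square_def k_def by simp
  qed
  have Hk: "H (n - 1) (k z) \<in> carr E n" and dHk: "diff E n (H (n - 1) (k z)) = - k z"
    if "z \<in> square n" for z
    using H_mem[of "k z" "n - 1"] H_htpy[of "k z" "n - 1"] k[OF that] by (simp_all add: s_zero H_zero)
  have "l z \<in> carr E n \<and> diff E n (l z) = fst z \<and> p n (l z) = snd z" if z: "z \<in> square n" for z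
  proof -
    have b: "snd z \<in> carr B n"
      using z unfolding square_def by simp
    have "diff B n (p n (H (n - 1) (k z))) = 0"
      using p_d[OF Hk[OF z]] dHk[OF z] k[OF z] by simp
    then have "diff E n (s n (p n (H (n - 1) (k z)))) = 0"
      using s_d[of "p n (H (n - 1) (k z))" n] Hk[OF z] s_zero by simp
    then show ?thesis
      unfolding l_def using b Hk[OF z] dHk[OF z] s_mem by (simp add: k_def)
  qed
  moreover have "lin_on (prod_scale sE sB) sE (square n) l"
  proof -
    have s_snd: "lin_on (prod_scale sE sB) sE (square n) (\<lambda>z. s n (snd z))"
      by (rule lin_on_comp[OF lin_on_snd s_lin]) (simp add: square_def)
    have "lin_on (prod_scale sE sB) sE (square n) k"
      unfolding k_def[abs_def]
      by (rule lin_on_minus[OF E.module_axioms lin_on_comp[OF s_snd E.lin_on_d] lin_on_fst])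
        (simp add: square_def s_mem)
    then have Hk_lin: "lin_on (prod_scale sE sB) sE (square n) (\<lambda>z. H (n - 1) (k z))"
      by (rule lin_on_comp[OF _ H_lin]) (simp add: k)
    then have "lin_on (prod_scale sE sB) sE (square n) (\<lambda>z. s n (p n (H (n - 1) (k z))))"
      by (rule lin_on_comp[OF lin_on_comp[OF _ lin_on_p] s_lin]) (simp_all add: Hk)
    then show ?thesis
      unfolding l_def[abs_def] by (rule lin_on_minus[OF E.module_axioms lin_on_plus[OF E.module_axioms s_snd Hk_lin]])
  qed
  ultimately show ?thesis
    unfolding square_section_def by blast
qed

end

theorem lemma2p9:
  fixes sE :: "'r::comm_ring_1 \<Rightarrow> 'e::ab_group_add \<Rightarrow> 'e"
    and sB :: "'r \<Rightarrow> 'b::ab_group_add \<Rightarrow> 'b"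
    and E :: "'e dg" and B :: "'b dg" and p :: "int \<Rightarrow> 'e \<Rightarrow> 'b"
  assumes "dg_module sE E" and "dg_module sB B" and "chain_map sE E sB B p"
  shows "(\<forall>n::int. enriched_rlp (*) (sphere_dg n) (*) (disk_dg n) (sphere_incl n) sE E sB B p)
     \<longleftrightarrow> degreewise_split_epi sE E sB B p \<and> chain_htpy_equiv sE E sB B p"
proof -
  interpret dg_map sE E sB B p
    using assms by (simp add: dg_map_def dg_map_axioms_def dg_complex_def)
  let ?htpy_section = "\<exists>s. chain_section s \<and> chain_homotopic sE E sE E (\<lambda>n x. s n (p n x)) (\<lambda>n x. x)"
  have "(\<forall>n. enriched_rlp (*) (sphere_dg n) (*) (disk_dg n) (sphere_incl n) sE E sB B p)
      \<longleftrightarrow> (\<forall>n. \<exists>l. square_section n l)"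
    using enriched_rlp_imp_square_section square_section_imp_enriched_rlp by blast
  also have "\<dots> \<longleftrightarrow> ?htpy_section"
  proof
    assume "\<forall>n. \<exists>l. square_section n l"
    then obtain L where L: "\<And>n. square_section n (L n)"
      by metis
    show ?htpy_section
      using square_sections_chain_section[OF L] square_sections_homotopy[OF L] by blast
  qed (use chain_section_homotopy_imp_square_section in blast)
  also have "\<dots> \<longleftrightarrow> degreewise_split_epi sE E sB B p \<and> chain_htpy_equiv sE E sB B p"
    using chain_section_imp_split_htpy_equiv htpy_equiv_imp_chain_section by blast
  finally show ?thesis .
qed

end
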